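(* Let $X\subset\mathbb{R}^2$ be a finite set with centroid $M$ and $1$-centre $C$. Then $M$ is the quadratic min-power centre of $X$ if and only if $M=C$.
   Context: Writing $X=\{x_j:j\in J\}$, the quadratic min-power centre is the unique minimiser of $P(s)=\sum_{j\in J}\|s-x_j\|^2+\max_{j\in J}\|s-x_j\|^2$; $M=\frac{1}{|J|}\sum_j x_j$; $C$ is the centre of the minimum enclosing circle of $X$. *)

theory Defs
  imports "HOL-Analysis.Analysis"
begin

definition qpower :: "(real^2) set \<Rightarrow> real^2 \<Rightarrow> real" where
  "qpower X s = (\<Sum>x\<in>X. (dist s x)\<^sup>2) + (MAX x\<in>X. (dist s x)\<^sup>2)"

definition is_qmp_centre :: "(real^2) set \<Rightarrow> real^2 \<Rightarrow> bool" where
  "is_qmp_centre X s \<longleftrightarrow> (\<forall>t. qpower X s \<le> qpower X t)"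

definition centroid :: "(real^2) set \<Rightarrow> real^2" where
  "centroid X = (1 / real (card X)) *\<^sub>R (\<Sum>x\<in>X. x)"

definition is_one_centre :: "(real^2) set \<Rightarrow> real^2 \<Rightarrow> bool" where
  "is_one_centre X c \<longleftrightarrow> (\<forall>t. (MAX x\<in>X. dist c x) \<le> (MAX x\<in>X. dist t x))"

end

theory Submission
  imports Defs
begin

text \<open>Write \<open>P s = \<Sum>\<^sub>x |s - x|\<^sup>2 + F s\<close> with \<open>F s = max\<^sub>x |s - x|\<^sup>2\<close>. By the parallel axis
  theorem the sum equals \<open>S + n |s - M|\<^sup>2\<close>, and \<open>F\<close> is strongly convex, so its minimiser is
  unique and is the 1-centre \<open>C\<close>. If \<open>M = C\<close>, then \<open>M\<close> minimises both summands. Conversely,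
  if \<open>M\<close> minimises \<open>P\<close>, then \<open>M\<close> minimises \<open>F\<close>: moving from \<open>M\<close> a distance \<open>e\<close> towards a
  point with smaller \<open>F\<close> costs \<open>O(e\<^sup>2)\<close> in the quadratic term but gains \<open>\<Omega>(e)\<close> in the convex
  term \<open>F\<close>. Hence \<open>M = C\<close>.\<close>

lemma sum_power2_dist_mean:
  fixes X :: "'a::real_inner set"
  assumes "finite X" "X \<noteq> {}"
  defines "M \<equiv> (1 / real (card X)) *\<^sub>R (\<Sum>x\<in>X. x)"
  shows "(\<Sum>x\<in>X. (dist s x)\<^sup>2) = (\<Sum>x\<in>X. (dist M x)\<^sup>2) + real (card X) * (dist s M)\<^sup>2"
proof -
  have "real (card X) *\<^sub>R M = (\<Sum>x\<in>X. x)"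
    using assms by (simp add: M_def card_gt_0_iff)
  then have "(\<Sum>x\<in>X. M - x) = 0"
    by (simp add: sum_subtractf sum_constant_scaleR)
  then have cross: "(\<Sum>x\<in>X. inner (s - M) (M - x)) = 0"
    by (simp flip: inner_sum_right)
  have expand: "(dist s x)\<^sup>2 = (dist s M)\<^sup>2 + 2 * inner (s - M) (M - x) + (dist M x)\<^sup>2" for x
  proof -
    have "(dist s x)\<^sup>2 = (norm ((s - M) + (M - x)))\<^sup>2"
      by (simp add: dist_norm)
    then show ?thesis
      by (simp add: dist_norm power2_norm_eq_inner inner_simps inner_commute algebra_simps)
  qed
  have "(\<Sum>x\<in>X. (dist s x)\<^sup>2) = (\<Sum>x\<in>X. (dist s M)\<^sup>2 + 2 * inner (s - M) (M - x) + (dist M x)\<^sup>2)"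
    by (rule sum.cong[OF refl expand])
  also have "\<dots> = real (card X) * (dist s M)\<^sup>2 + 2 * (\<Sum>x\<in>X. inner (s - M) (M - x)) + (\<Sum>x\<in>X. (dist M x)\<^sup>2)"
    by (simp add: sum.distrib sum_distrib_left)
  finally show ?thesis
    using cross by simp
qed

lemma power2_norm_convex_combination:
  fixes u v :: "'a::real_inner"
  shows "(norm ((1 - e) *\<^sub>R u + e *\<^sub>R v))\<^sup>2 =
    (1 - e) * (norm u)\<^sup>2 + e * (norm v)\<^sup>2 - e * (1 - e) * (norm (u - v))\<^sup>2"
  by (simp add: power2_norm_eq_inner inner_simps inner_commute algebra_simps)

lemma Max_power2_dist_strongly_convex:
  fixes X :: "'a::real_inner set"
  assumes "finite X" "X \<noteq> {}" "0 \<le> e" "e \<le> 1"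
  shows "(MAX x\<in>X. (dist ((1 - e) *\<^sub>R a + e *\<^sub>R b) x)\<^sup>2) \<le>
    (1 - e) * (MAX x\<in>X. (dist a x)\<^sup>2) + e * (MAX x\<in>X. (dist b x)\<^sup>2) - e * (1 - e) * (dist a b)\<^sup>2"
proof -
  have "(dist ((1 - e) *\<^sub>R a + e *\<^sub>R b) x)\<^sup>2 \<le>
      (1 - e) * (MAX x\<in>X. (dist a x)\<^sup>2) + e * (MAX x\<in>X. (dist b x)\<^sup>2) - e * (1 - e) * (dist a b)\<^sup>2"
    if "x \<in> X" for x
  proof -
    have "(1 - e) *\<^sub>R a + e *\<^sub>R b - x = (1 - e) *\<^sub>R (a - x) + e *\<^sub>R (b - x)"
      by (simp add: algebra_simps)
    then have "(dist ((1 - e) *\<^sub>R a + e *\<^sub>R b) x)\<^sup>2 =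
        (1 - e) * (dist a x)\<^sup>2 + e * (dist b x)\<^sup>2 - e * (1 - e) * (dist a b)\<^sup>2"
      using power2_norm_convex_combination[of e "a - x" "b - x"] by (simp add: dist_norm)
    moreover have "(1 - e) * (dist a x)\<^sup>2 \<le> (1 - e) * (MAX x\<in>X. (dist a x)\<^sup>2)"
      using assms that by (intro mult_left_mono) auto
    moreover have "e * (dist b x)\<^sup>2 \<le> e * (MAX x\<in>X. (dist b x)\<^sup>2)"
      using assms that by (intro mult_left_mono) auto
    ultimately show ?thesis
      by linarith
  qed
  then show ?thesis
    using assms by simp
qed

lemma convex_on_Max_power2_dist:
  fixes X :: "'a::real_inner set"
  assumes "finite X" "X \<noteq> {}"
  shows "convex_on UNIV (\<lambda>s. MAX x\<in>X. (dist s x)\<^sup>2)"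
proof (rule convex_onI)
  fix e :: real and a b :: 'a
  assume "0 < e" "e < 1"
  then have "e * (1 - e) * (dist a b)\<^sup>2 \<ge> 0"
    by simp
  then show "(MAX x\<in>X. (dist ((1 - e) *\<^sub>R a + e *\<^sub>R b) x)\<^sup>2) \<le>
      (1 - e) * (MAX x\<in>X. (dist a x)\<^sup>2) + e * (MAX x\<in>X. (dist b x)\<^sup>2)"
    using Max_power2_dist_strongly_convex[OF assms, of e a b] \<open>0 < e\<close> \<open>e < 1\<close> by linarith
qed simp

lemma Max_power2_dist_minimiser_unique:
  fixes X :: "'a::real_inner set"
  assumes "finite X" "X \<noteq> {}"
    and a: "\<And>t. (MAX x\<in>X. (dist a x)\<^sup>2) \<le> (MAX x\<in>X. (dist t x)\<^sup>2)"
    and b: "\<And>t. (MAX x\<in>X. (dist b x)\<^sup>2) \<le> (MAX x\<in>X. (dist t x)\<^sup>2)"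
  shows "a = b"
proof -
  let ?F = "\<lambda>s. MAX x\<in>X. (dist s x)\<^sup>2"
  define m where "m = (1 - 1/2) *\<^sub>R a + (1/2 :: real) *\<^sub>R b"
  have "?F m \<le> (1/2) * ?F a + (1/2) * ?F b - (1/4) * (dist a b)\<^sup>2"
    using Max_power2_dist_strongly_convex[OF assms(1,2), of "1/2" a b] by (simp add: m_def)
  moreover have "?F a \<le> ?F m"
    by (rule a)
  moreover have "?F a = ?F b"
    using a b by (meson antisym)
  ultimately have "(dist a b)\<^sup>2 \<le> 0"
    by linarith
  then show ?thesis
    by simp
qed

lemma Max_power2_dist_mono:
  fixes X :: "'a::metric_space set"
  assumes "finite X" "X \<noteq> {}"
    and "(MAX x\<in>X. dist a x) \<le> (MAX x\<in>X. dist b x)"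
  shows "(MAX x\<in>X. (dist a x)\<^sup>2) \<le> (MAX x\<in>X. (dist b x)\<^sup>2)"
proof -
  have "(MAX x\<in>X. dist b x) \<in> (\<lambda>x. dist b x) ` X"
    using assms(1,2) by (intro Max_in) auto
  then obtain y where "y \<in> X" and y: "(MAX x\<in>X. dist b x) = dist b y"
    by blast
  have "(dist a x)\<^sup>2 \<le> (MAX x\<in>X. (dist b x)\<^sup>2)" if "x \<in> X" for x
  proof -
    have "dist a x \<le> (MAX x\<in>X. dist a x)"
      using assms(1) that by simp
    with assms(3) y have "dist a x \<le> dist b y"
      by linarith
    then have "(dist a x)\<^sup>2 \<le> (dist b y)\<^sup>2"
      by (simp add: power_mono)
    also have "\<dots> \<le> (MAX x\<in>X. (dist b x)\<^sup>2)"
      using assms(1) \<open>y \<in> X\<close> by simp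
    finally show ?thesis .
  qed
  then show ?thesis
    using assms(1,2) by (intro Max.boundedI) auto
qed

text \<open>Along the segment from \<open>M\<close> towards \<open>t\<close> the penalty is second order in the step length,
  while convexity makes the gain in \<open>f\<close> first order.\<close>

lemma convex_minimiser_of_quadratic_perturbation:
  fixes f :: "'a::real_normed_vector \<Rightarrow> real"
  assumes "convex_on UNIV f" "0 \<le> c"
    and min: "\<And>s. f M \<le> c * (dist s M)\<^sup>2 + f s"
  shows "f M \<le> f t"
proof (rule field_le_epsilon)
  fix \<epsilon> :: real
  assume "0 < \<epsilon>"
  define d where "d = c * (dist t M)\<^sup>2"
  define e where "e = min 1 (\<epsilon> / (d + 1))"
  have "0 \<le> d"
    using \<open>0 \<le> c\<close> by (simp add: d_def)
  then have "0 < e" "e \<le> 1" "e * d \<le> \<epsilon>"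
    using \<open>0 < \<epsilon>\<close> by (auto simp: e_def min_def field_simps)
  define s where "s = (1 - e) *\<^sub>R M + e *\<^sub>R t"
  have "dist s M = e * dist t M"
    using \<open>0 < e\<close> by (simp add: s_def dist_norm algebra_simps flip: scaleR_diff_right)
  then have "f M \<le> e\<^sup>2 * d + f s"
    using min[of s] by (simp add: d_def power_mult_distrib algebra_simps)
  also have "f s \<le> (1 - e) * f M + e * f t"
    using convex_onD[OF assms(1)] \<open>0 < e\<close> \<open>e \<le> 1\<close> by (simp add: s_def)
  finally have "e * f M \<le> e * (e * d + f t)"
    by (simp add: power2_eq_square algebra_simps)
  then have "f M \<le> e * d + f t"
    using \<open>0 < e\<close> by simp
  with \<open>e * d \<le> \<epsilon>\<close> show "f M \<le> f t + \<epsilon>"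
    by simp
qed

theorem corollary2:
  fixes X :: "(real^2) set" and C :: "real^2"
  assumes "finite X" and "X \<noteq> {}"
    and "is_one_centre X C"
  shows "is_qmp_centre X (centroid X) \<longleftrightarrow> centroid X = C"
proof -
  define M where "M = centroid X"
  define F where "F s = (MAX x\<in>X. (dist s x)\<^sup>2)" for s
  define n where "n = real (card X)"
  have qpower_eq: "qpower X s = qpower X M - F M + n * (dist s M)\<^sup>2 + F s" for s
    using sum_power2_dist_mean[OF assms(1,2), of s] sum_power2_dist_mean[OF assms(1,2), of M]
    by (simp add: qpower_def F_def M_def n_def centroid_def)
  have C_min: "F C \<le> F t" for t
    using assms Max_power2_dist_mono unfolding is_one_centre_def F_def by blast
  show ?thesis
  proof
    assume "is_qmp_centre X (centroid X)"
    then have M_min: "qpower X M \<le> qpower X s" for s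
      by (simp add: is_qmp_centre_def M_def)
    have F_M_min: "F M \<le> n * (dist s M)\<^sup>2 + F s" for s
      using M_min[of s] qpower_eq[of s] by linarith
    have F_convex: "convex_on UNIV F"
      unfolding F_def[abs_def] using assms(1,2) by (rule convex_on_Max_power2_dist)
    have "F M \<le> F t" for t
      using convex_minimiser_of_quadratic_perturbation[OF F_convex _ F_M_min] by (simp add: n_def)
    then show "centroid X = C"
      using Max_power2_dist_minimiser_unique[OF assms(1,2)] C_min by (simp add: F_def M_def)
  next
    assume "centroid X = C"
    then have "qpower X M \<le> qpower X t" for t
      using qpower_eq[of t] C_min[of t] by (simp add: M_def n_def add_increasing)
    then show "is_qmp_centre X (centroid X)"
      by (simp add: is_qmp_centre_def M_def)
  qed
qed

end
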